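(* There exist unique polynomials $A_k(a,b,c,d)$ and $B_k(a,b)$ with rational coefficients ($k\ge-1$) such that $A_{-1}=0$, $B_{-1}=0$ and, for all $k\ge0$, \[ (k+2)(a-b+c-d)A_k(a,b,c,d)=\frac{a^2-b^2+c^2-d^2}{2}A_{k-1}(a,b,c,d)-P_k(a,b,c,d), \] \[ (k+2)(a-b)B_k(a,b)=\frac{a^2-b^2}{2}B_{k-1}(a,b)-R_k(a,b)-T_k(a,b). \] Moreover, for all $k\ge1$ the polynomial $A_k$ has degree $k+1$; for all $k\ge0$ the polynomial $B_k$ has degree $k+2$; for all $k\ge0$ one has the identity of rational functions \[ A_k(a,b,c,a+c-b)=\frac{1}{(k+1)!}(a-b)\,\frac{a^{k+1}-b^{k+1}+c^{k+1}-(a+c-b)^{k+1}}{b-c}, \] and \[ B_k(a,a)=\frac{k(k+3)}{(k+2)!}a^{k+2}-\frac{1}{12\,k!}a^k+2\beta_{k+1}a-2(k+1)\beta_{k+2}. \]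
   Context: For $k\ge0$: $P_k(a,b,c,d)=\frac{1}{k!\,2^k}\Bigl((a-b)^2\bigl((-a+b+c+d)^k-(a-b+c+d)^k\bigr)+(c-d)^2\bigl((a+b-c+d)^k-(a+b+c-d)^k\bigr)\Bigr)$; $R_k(a,b)=[\zeta^k]\,\mathrm e^{\zeta(a-b)/2}\bigl((b-\partial_\zeta)^2-(a-b)^2\bigr)\frac{1-\mathrm e^{-(a-b)\zeta}}{\sinh(\zeta/2)}$, where the differential operator acts on the power series $\frac{1-\mathrm e^{-(a-b)\zeta}}{\sinh(\zeta/2)}\in\mathbb Q[a,b][[\zeta]]$ and $[\zeta^k]$ extracts the coefficient of $\zeta^k$; $T_k(a,b)=\frac{2}{3\,k!}\bigl(b(b^2-\tfrac14)-a(a^2-\tfrac14)\bigr)\bigl(\frac{a+b}{2}\bigr)^k$. The rationals $\beta_k$ are defined by $\sum_{k\ge0}\beta_ky^k=\frac{y/2}{\sinh(y/2)}$. *)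

theory Defs
  imports "HOL-Library.Poly_Mapping" "HOL-Computational_Algebra.Formal_Power_Series"
begin

text \<open>A polynomial with rational coefficients in the variables indexed by nat
  (a = variable 0, b = variable 1, c = variable 2, d = variable 3) is a finitely
  supported map from monomials (exponent vectors, finitely supported nat to nat)
  to rational coefficients.\<close>

type_synonym mpoly = "(nat \<Rightarrow>\<^sub>0 nat) \<Rightarrow>\<^sub>0 rat"

definition Var :: "nat \<Rightarrow> mpoly" where
  "Var i = Poly_Mapping.single (Poly_Mapping.single i 1) 1"

definition Const :: "rat \<Rightarrow> mpoly" where
  "Const r = Poly_Mapping.single 0 r"

abbreviation "Xa \<equiv> Var 0"
abbreviation "Xb \<equiv> Var 1"
abbreviation "Xc \<equiv> Var 2"
abbreviation "Xd \<equiv> Var 3"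

definition vars :: "mpoly \<Rightarrow> nat set" where
  "vars p = \<Union> (Poly_Mapping.keys ` Poly_Mapping.keys p)"

text \<open>Total degree (the zero polynomial gets degree 0).\<close>
definition total_degree :: "mpoly \<Rightarrow> nat" where
  "total_degree p = Max (insert 0
     ((\<lambda>m. sum (Poly_Mapping.lookup m) (Poly_Mapping.keys m)) ` Poly_Mapping.keys p))"

definition subst :: "(nat \<Rightarrow> mpoly) \<Rightarrow> mpoly \<Rightarrow> mpoly" where
  "subst f p = (\<Sum>m\<in>Poly_Mapping.keys p.
      Const (Poly_Mapping.lookup p m) *
      (\<Prod>i\<in>Poly_Mapping.keys m. f i ^ Poly_Mapping.lookup m i))"

definition exp_ser :: "(rat \<Rightarrow> 'a::comm_ring_1) \<Rightarrow> 'a \<Rightarrow> 'a fps" where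
  "exp_ser emb c = Abs_fps (\<lambda>n. emb (1 / fact n) * c ^ n)"

definition sinh_half :: "(rat \<Rightarrow> 'a::comm_ring_1) \<Rightarrow> 'a fps" where
  "sinh_half emb = Abs_fps (\<lambda>n. if odd n then emb (1 / (2 ^ n * fact n)) else 0)"

definition beta :: "nat \<Rightarrow> rat" where
  "beta k = fps_nth (THE f. f * sinh_half id = fps_const (1/2) * fps_X) k"

definition P :: "nat \<Rightarrow> mpoly" where
  "P k = Const (1 / (fact k * 2 ^ k)) *
     ((Xa - Xb)^2 * ((- Xa + Xb + Xc + Xd) ^ k - (Xa - Xb + Xc + Xd) ^ k)
      + (Xc - Xd)^2 * ((Xa + Xb - Xc + Xd) ^ k - (Xa + Xb + Xc - Xd) ^ k))"

definition Rquot :: "mpoly fps" where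
  "Rquot = (THE F. F * sinh_half Const = 1 - exp_ser Const (- (Xa - Xb)))"

definition Rop :: "mpoly fps \<Rightarrow> mpoly fps" where
  "Rop G = (let L = (\<lambda>H. fps_const Xb * H - fps_deriv H) in
            L (L G) - fps_const ((Xa - Xb)^2) * G)"

definition R :: "nat \<Rightarrow> mpoly" where
  "R k = fps_nth (exp_ser Const (Const (1/2) * (Xa - Xb)) * Rop Rquot) k"

definition T :: "nat \<Rightarrow> mpoly" where
  "T k = Const (2 / (3 * fact k)) *
     (Xb * (Xb^2 - Const (1/4)) - Xa * (Xa^2 - Const (1/4))) *
     (Const (1/2) * (Xa + Xb)) ^ k"

end

theory Submission
  imports Defs
begin

unbundle fps_syntax

text \<open>
  Both recurrences have the shape \<open>(k+2) s X(k) = F(k, X(k-1))\<close> with \<open>s \<noteq> 0\<close>, so their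
  solutions are unique; the content is that every division by \<open>s\<close> is exact.

  For A, the generating series \<open>H(z) = \<Sum> A(k) z^(k+2)\<close> must solve the linear ODE
  \<open>s H' - q H = -z \<Sum> P(k) z^k\<close>, whose right-hand side is a combination of four exponentials.
  They come in two pairs whose exponents differ by \<open>d - a\<close> and \<open>b - c\<close>, and each pair has an
  explicit solution \<open>e^(\<lambda>z) G(z)\<close> with polynomial coefficients. The recurrence preserves
  homogeneity; on the hyperplane \<open>d = a + c - b\<close> its left-hand side vanishes, which yields
  \<open>A(k)(a,b,c,a+c-b)\<close>, and this value is nonzero at \<open>(a,b,c) = (1,0,1)\<close>, giving the degree.

  For B, \<open>(1 - e^(-(a-b)z)) / sinh(z/2)\<close> is \<open>a - b\<close> times a series with polynomial
  coefficients and \<open>T(k)\<close> is divisible by \<open>a - b\<close>, so \<open>R(k) + T(k) = (a - b) Q(k)\<close> (\<open>Q = RT_quot\<close>) and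
  \<open>B(k+1) = ((a+b)/2 B(k) - Q(k+1)) / (k+3)\<close>. On the diagonal \<open>b = a\<close> only
  \<open>z / sinh(z/2) = 2 \<Sum> \<beta>(k) z^k\<close> survives in \<open>Q(k)\<close>, and the closed form for \<open>B(k)(a,a)\<close>
  follows by induction; its leading coefficient \<open>k(k+3)/(k+2)!\<close> gives the degree for
  \<open>k \<ge> 1\<close>, while \<open>B(0) = (a - b)\<^sup>2\<close>.
\<close>

section \<open>Polynomials\<close>

lemma Const_mult: "Const a * Const b = Const (a * b)"
  unfolding Const_def by (simp add: mult_single)

lemma Const_add: "Const a + Const b = Const (a + b)"
  unfolding Const_def by (simp add: single_add)

lemma Const_diff: "Const a - Const b = Const (a - b)"
  unfolding Const_def by (simp add: single_diff)

lemma Const_uminus: "- Const a = Const (- a)"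
  unfolding Const_def by (simp add: single_uminus)

lemma Const_0 [simp]: "Const 0 = 0"
  unfolding Const_def by simp

lemma Const_1 [simp]: "Const 1 = 1"
  unfolding Const_def by simp

lemma Const_of_nat: "Const (of_nat n) = of_nat n"
  unfolding Const_def by simp

lemma Const_numeral: "Const (numeral n) = numeral n"
  unfolding Const_def by simp

lemma Const_power: "Const (a ^ n) = Const a ^ n"
  by (induction n) (simp_all add: Const_mult[symmetric])

lemma Const_sum: "Const (sum f A) = (\<Sum>x\<in>A. Const (f x))"
  by (induction A rule: infinite_finite_induct) (simp_all add: Const_add[symmetric])

lemma Const_eq_iff [simp]: "Const a = Const b \<longleftrightarrow> a = b"
  unfolding Const_def by (simp add: inj_eq)

lemma Const_eq_0_iff [simp]: "Const a = 0 \<longleftrightarrow> a = 0"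
  using Const_eq_iff[of a 0] by simp

abbreviation half :: mpoly where
  "half \<equiv> Const (1/2)"

lemma half_double: "2 * half = 1"
  by (simp add: Const_numeral[symmetric] Const_mult)

lemma half_mult_double: "half * (2 * y) = y"
proof -
  have "half * (2 * y) = (2 * half) * y"
    by (simp only: mult_ac)
  then show ?thesis by (simp add: half_double)
qed

lemma half_mult_add_double: "half * (x + 2 * y) = half * x + y"
  by (simp only: distrib_left half_mult_double)

lemma single_Suc_0_eq_iff:
  "Poly_Mapping.single i (Suc 0) = Poly_Mapping.single j (Suc 0) \<longleftrightarrow> i = j"
  by (metis lookup_single_eq lookup_single_not_eq nat.simps(3))

lemma Var_diff_neq_0: "i \<noteq> j \<Longrightarrow> Var i - Var j \<noteq> 0"
proof
  assume "i \<noteq> j" "Var i - Var j = 0"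
  then have "Poly_Mapping.lookup (Var i - Var j) (Poly_Mapping.single i 1) = 0" by simp
  with \<open>i \<noteq> j\<close> show False
    by (simp add: Var_def lookup_minus lookup_single when_def single_Suc_0_eq_iff)
qed

definition mdeg :: "(nat \<Rightarrow>\<^sub>0 nat) \<Rightarrow> nat" where
  "mdeg m = sum (Poly_Mapping.lookup m) (Poly_Mapping.keys m)"

lemma mdeg_superset:
  assumes "finite S" "Poly_Mapping.keys m \<subseteq> S"
  shows "mdeg m = sum (Poly_Mapping.lookup m) S"
  unfolding mdeg_def
  by (rule sum.mono_neutral_left) (use assms in \<open>auto simp: in_keys_iff\<close>)

lemma mdeg_add: "mdeg (m1 + m2) = mdeg m1 + mdeg m2"
proof -
  let ?S = "Poly_Mapping.keys m1 \<union> Poly_Mapping.keys m2"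
  have "mdeg (m1 + m2) = sum (Poly_Mapping.lookup (m1 + m2)) ?S"
    by (rule mdeg_superset) (auto dest: keys_add[THEN subsetD])
  also have "\<dots> = sum (Poly_Mapping.lookup m1) ?S + sum (Poly_Mapping.lookup m2) ?S"
    by (simp add: lookup_add sum.distrib)
  also have "\<dots> = mdeg m1 + mdeg m2"
    by (subst (1 2) mdeg_superset[where S = ?S]) auto
  finally show ?thesis .
qed

lemma mdeg_0 [simp]: "mdeg 0 = 0"
  by (simp add: mdeg_def)

lemma mdeg_single [simp]: "mdeg (Poly_Mapping.single i n) = n"
  by (simp add: mdeg_def)

lemma poly_mapping_sum_single:
  "p = (\<Sum>m\<in>Poly_Mapping.keys p. Poly_Mapping.single m (Poly_Mapping.lookup p m))"
  by (rule poly_mapping_eqI) (simp add: lookup_sum lookup_single when_def in_keys_iff)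


definition subst_monomial :: "(nat \<Rightarrow> mpoly) \<Rightarrow> (nat \<Rightarrow>\<^sub>0 nat) \<Rightarrow> mpoly" where
  "subst_monomial f m = (\<Prod>i\<in>Poly_Mapping.keys m. f i ^ Poly_Mapping.lookup m i)"

lemma subst_monomial_superset:
  assumes "finite S" "Poly_Mapping.keys m \<subseteq> S"
  shows "subst_monomial f m = (\<Prod>i\<in>S. f i ^ Poly_Mapping.lookup m i)"
  unfolding subst_monomial_def
  by (rule prod.mono_neutral_left) (use assms in \<open>auto simp: in_keys_iff\<close>)

lemma subst_monomial_add:
  "subst_monomial f (m1 + m2) = subst_monomial f m1 * subst_monomial f m2"
proof -
  let ?S = "Poly_Mapping.keys m1 \<union> Poly_Mapping.keys m2"
  have "subst_monomial f (m1 + m2) = (\<Prod>i\<in>?S. f i ^ Poly_Mapping.lookup (m1 + m2) i)"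
    by (rule subst_monomial_superset) (auto dest: keys_add[THEN subsetD])
  also have "\<dots> = (\<Prod>i\<in>?S. f i ^ Poly_Mapping.lookup m1 i) * (\<Prod>i\<in>?S. f i ^ Poly_Mapping.lookup m2 i)"
    by (simp add: lookup_add power_add prod.distrib)
  also have "\<dots> = subst_monomial f m1 * subst_monomial f m2"
    by (subst (1 2) subst_monomial_superset[where S = ?S]) auto
  finally show ?thesis .
qed

lemma subst_eq_sum_monomials:
  "subst f p = (\<Sum>m\<in>Poly_Mapping.keys p. Const (Poly_Mapping.lookup p m) * subst_monomial f m)"
  unfolding subst_def subst_monomial_def ..

lemma subst_superset:
  assumes "finite S" "Poly_Mapping.keys p \<subseteq> S"
  shows "subst f p = (\<Sum>m\<in>S. Const (Poly_Mapping.lookup p m) * subst_monomial f m)"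
  unfolding subst_eq_sum_monomials
  by (rule sum.mono_neutral_left) (use assms in \<open>auto simp: in_keys_iff\<close>)

lemma subst_add: "subst f (p + q) = subst f p + subst f q"
proof -
  let ?S = "Poly_Mapping.keys p \<union> Poly_Mapping.keys q"
  let ?t = "\<lambda>r m. Const (Poly_Mapping.lookup r m) * subst_monomial f m"
  have "subst f (p + q) = (\<Sum>m\<in>?S. ?t (p + q) m)"
    by (rule subst_superset) (auto dest: keys_add[THEN subsetD])
  also have "\<dots> = (\<Sum>m\<in>?S. ?t p m) + (\<Sum>m\<in>?S. ?t q m)"
    by (simp add: lookup_add Const_add[symmetric] distrib_right sum.distrib)
  also have "\<dots> = subst f p + subst f q"
    by (subst (1 2) subst_superset[where S = ?S]) auto
  finally show ?thesis .
qed

lemma subst_0 [simp]: "subst f 0 = 0"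
  by (simp add: subst_def)

lemma subst_sum: "subst f (sum g A) = (\<Sum>x\<in>A. subst f (g x))"
  by (induction A rule: infinite_finite_induct) (simp_all add: subst_add)

lemma subst_single: "subst f (Poly_Mapping.single m c) = Const c * subst_monomial f m"
  by (cases "c = 0") (simp_all add: subst_eq_sum_monomials)

lemma subst_mult: "subst f (p * q) = subst f p * subst f q"
proof -
  let ?c = "Poly_Mapping.lookup"
  have "p * q = (\<Sum>m\<in>Poly_Mapping.keys p. Poly_Mapping.single m (?c p m)) *
                (\<Sum>m\<in>Poly_Mapping.keys q. Poly_Mapping.single m (?c q m))"
    by (simp flip: poly_mapping_sum_single)
  also have "\<dots> = (\<Sum>m\<in>Poly_Mapping.keys p. \<Sum>m'\<in>Poly_Mapping.keys q.
       Poly_Mapping.single (m + m') (?c p m * ?c q m'))"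
    by (simp add: sum_distrib_left sum_distrib_right mult_single) (rule sum.swap)
  finally have "subst f (p * q) = (\<Sum>m\<in>Poly_Mapping.keys p. \<Sum>m'\<in>Poly_Mapping.keys q.
       Const (?c p m) * subst_monomial f m * (Const (?c q m') * subst_monomial f m'))"
    by (simp add: subst_sum subst_single subst_monomial_add Const_mult[symmetric] mult_ac)
  also have "\<dots> = subst f p * subst f q"
    by (simp add: subst_eq_sum_monomials sum_distrib_left sum_distrib_right) (rule sum.swap)
  finally show ?thesis .
qed

lemma subst_Const [simp]: "subst f (Const c) = Const c"
  by (simp add: Const_def subst_single subst_monomial_def)

lemma subst_1 [simp]: "subst f 1 = 1"
  using subst_Const[of f 1] by simp

lemma subst_uminus: "subst f (- p) = - subst f p"
  using subst_add[of f p "- p"] by (simp add: add_eq_0_iff2)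

lemma subst_diff: "subst f (p - q) = subst f p - subst f q"
  using subst_add[of f p "- q"] by (simp add: subst_uminus)

lemma subst_power: "subst f (p ^ n) = subst f p ^ n"
  by (induction n) (simp_all add: subst_mult)

lemma subst_of_nat [simp]: "subst f (of_nat n) = of_nat n"
  using subst_Const[of f "of_nat n"] by (simp add: Const_of_nat)

lemma subst_Var [simp]: "subst f (Var i) = f i"
  by (simp add: Var_def subst_single subst_monomial_def)

lemmas subst_simps = subst_add subst_mult subst_uminus subst_diff subst_power


lemma vars_add: "vars p \<subseteq> S \<Longrightarrow> vars q \<subseteq> S \<Longrightarrow> vars (p + q) \<subseteq> S"
  unfolding vars_def using keys_add[of p q] by blast

lemma vars_diff: "vars p \<subseteq> S \<Longrightarrow> vars q \<subseteq> S \<Longrightarrow> vars (p - q) \<subseteq> S"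
  unfolding vars_def using keys_diff[of p q] by blast

lemma vars_uminus: "vars p \<subseteq> S \<Longrightarrow> vars (- p) \<subseteq> S"
  unfolding vars_def by simp

lemma vars_mult:
  assumes "vars p \<subseteq> S" "vars q \<subseteq> S"
  shows "vars (p * q) \<subseteq> S"
proof
  fix i assume "i \<in> vars (p * q)"
  then obtain m where m: "m \<in> Poly_Mapping.keys (p * q)" "i \<in> Poly_Mapping.keys m"
    unfolding vars_def by blast
  then obtain u v where "m = u + v" "u \<in> Poly_Mapping.keys p" "v \<in> Poly_Mapping.keys q"
    using keys_mult[of p q] by blast
  with m(2) assms show "i \<in> S"
    unfolding vars_def using keys_add[of u v] by blast
qed

lemma vars_Const: "vars (Const c) \<subseteq> S"
  unfolding vars_def Const_def by auto

lemma vars_0: "vars 0 \<subseteq> S"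
  unfolding vars_def by auto

lemma vars_1: "vars 1 \<subseteq> S"
  using vars_Const[of 1] by simp

lemma vars_of_nat: "vars (of_nat n) \<subseteq> S"
  using vars_Const[of "of_nat n"] by (simp add: Const_of_nat)

lemma vars_Var: "i \<in> S \<Longrightarrow> vars (Var i) \<subseteq> S"
  unfolding vars_def Var_def by auto

lemma vars_power: "vars p \<subseteq> S \<Longrightarrow> vars (p ^ n) \<subseteq> S"
  by (induction n) (simp_all add: vars_1 vars_mult)

lemma vars_sum: "(\<And>x. x \<in> A \<Longrightarrow> vars (f x) \<subseteq> S) \<Longrightarrow> vars (sum f A) \<subseteq> S"
  by (induction A rule: infinite_finite_induct) (simp_all add: vars_0 vars_add)

lemmas vars_intros = vars_add vars_diff vars_uminus vars_mult vars_Const vars_0 vars_1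
  vars_of_nat vars_Var vars_power vars_sum


definition homogeneous :: "nat \<Rightarrow> mpoly \<Rightarrow> bool" where
  "homogeneous d p \<longleftrightarrow> (\<forall>m\<in>Poly_Mapping.keys p. mdeg m = d)"

lemma homogeneous_add: "homogeneous d p \<Longrightarrow> homogeneous d q \<Longrightarrow> homogeneous d (p + q)"
  unfolding homogeneous_def using keys_add[of p q] by blast

lemma homogeneous_diff: "homogeneous d p \<Longrightarrow> homogeneous d q \<Longrightarrow> homogeneous d (p - q)"
  unfolding homogeneous_def using keys_diff[of p q] by blast

lemma homogeneous_uminus: "homogeneous d p \<Longrightarrow> homogeneous d (- p)"
  unfolding homogeneous_def by simp

lemma homogeneous_mult:
  assumes "homogeneous d p" "homogeneous e q" "d + e = n"
  shows "homogeneous n (p * q)"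
  unfolding homogeneous_def
proof
  fix m assume "m \<in> Poly_Mapping.keys (p * q)"
  then obtain u v where "m = u + v" "u \<in> Poly_Mapping.keys p" "v \<in> Poly_Mapping.keys q"
    using keys_mult[of p q] by blast
  with assms show "mdeg m = n" by (auto simp: homogeneous_def mdeg_add)
qed

lemma homogeneous_Const: "homogeneous 0 (Const c)"
  unfolding homogeneous_def Const_def by auto

lemma homogeneous_Var: "homogeneous 1 (Var i)"
  unfolding homogeneous_def Var_def by auto

lemma homogeneous_power:
  assumes "homogeneous d p" "n * d = e"
  shows "homogeneous e (p ^ n)"
  using assms(2)
proof (induction n arbitrary: e)
  case 0
  then show ?case using homogeneous_Const[of 1] by simp
next
  case (Suc n)
  then show ?case using homogeneous_mult[OF assms(1) Suc.IH[OF refl], of e] by simp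
qed

lemma homogeneous_Const_mult: "homogeneous d p \<Longrightarrow> homogeneous d (Const c * p)"
  using homogeneous_mult[OF homogeneous_Const] by simp

lemma homogeneous_of_nat_mult_iff:
  assumes "n \<noteq> 0"
  shows "homogeneous d (of_nat n * p) \<longleftrightarrow> homogeneous d p"
proof
  assume "homogeneous d (of_nat n * p)"
  moreover have "p = Const (1 / of_nat n) * (of_nat n * p)"
    using assms by (simp add: Const_of_nat[symmetric] mult.assoc[symmetric] Const_mult)
  ultimately show "homogeneous d p" by (metis homogeneous_Const_mult)
qed (metis homogeneous_Const_mult Const_of_nat)

definition homogeneous_part :: "nat \<Rightarrow> mpoly \<Rightarrow> mpoly" where
  "homogeneous_part d p =
     Abs_poly_mapping (\<lambda>m. if mdeg m = d then Poly_Mapping.lookup p m else 0)"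

lemma lookup_homogeneous_part:
  "Poly_Mapping.lookup (homogeneous_part d p) m = (if mdeg m = d then Poly_Mapping.lookup p m else 0)"
proof -
  have "finite {m. (if mdeg m = d then Poly_Mapping.lookup p m else 0) \<noteq> 0}"
    by (rule finite_subset[of _ "{m. Poly_Mapping.lookup p m \<noteq> 0}"]) auto
  then show ?thesis unfolding homogeneous_part_def by simp
qed

lemma homogeneous_part_add:
  "homogeneous_part d (p + q) = homogeneous_part d p + homogeneous_part d q"
  by (rule poly_mapping_eqI) (simp add: lookup_homogeneous_part lookup_add)

lemma homogeneous_part_eq_0:
  "(\<forall>m\<in>Poly_Mapping.keys p. mdeg m \<noteq> d) \<Longrightarrow> homogeneous_part d p = 0"
  by (rule poly_mapping_eqI) (auto simp: lookup_homogeneous_part in_keys_iff)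

lemma homogeneous_part_mult_homogeneous:
  assumes "homogeneous e s"
  shows "homogeneous_part (d + e) (s * p) = s * homogeneous_part d p"
proof -
  define r where "r = p - homogeneous_part d p"
  have s_part: "homogeneous_part (d + e) (s * homogeneous_part d p) = s * homogeneous_part d p"
  proof (rule poly_mapping_eqI)
    have "homogeneous d (homogeneous_part d p)"
      unfolding homogeneous_def by (auto simp: lookup_homogeneous_part in_keys_iff split: if_splits)
    then have "homogeneous (d + e) (s * homogeneous_part d p)"
      using homogeneous_mult[OF assms] by (simp add: add.commute)
    then show "Poly_Mapping.lookup (homogeneous_part (d + e) (s * homogeneous_part d p)) m =
               Poly_Mapping.lookup (s * homogeneous_part d p) m" for m
      by (auto simp: homogeneous_def lookup_homogeneous_part in_keys_iff)
  qed
  have r_part: "homogeneous_part (d + e) (s * r) = 0"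
  proof (rule homogeneous_part_eq_0, rule ballI)
    fix m assume "m \<in> Poly_Mapping.keys (s * r)"
    then obtain u v where "m = u + v" "u \<in> Poly_Mapping.keys s" "v \<in> Poly_Mapping.keys r"
      using keys_mult[of s r] by blast
    moreover have "mdeg v \<noteq> d" if "v \<in> Poly_Mapping.keys r" for v
      using that unfolding r_def by (auto simp: in_keys_iff lookup_minus lookup_homogeneous_part)
    ultimately show "mdeg m \<noteq> d + e"
      using assms by (auto simp: homogeneous_def mdeg_add)
  qed
  have "s * p = s * homogeneous_part d p + s * r"
    by (simp add: r_def algebra_simps)
  then have "homogeneous_part (d + e) (s * p) =
      homogeneous_part (d + e) (s * homogeneous_part d p) + homogeneous_part (d + e) (s * r)"
    by (simp add: homogeneous_part_add)
  with s_part r_part show ?thesis by simp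
qed

lemma homogeneous_mult_cancel:
  assumes "homogeneous e s" "s \<noteq> 0" "homogeneous (d + e) (s * p)"
  shows "homogeneous d p"
  unfolding homogeneous_def
proof
  fix m assume m: "m \<in> Poly_Mapping.keys p"
  show "mdeg m = d"
  proof (rule ccontr)
    assume "mdeg m \<noteq> d"
    have "s * homogeneous_part (mdeg m) p = homogeneous_part (mdeg m + e) (s * p)"
      using homogeneous_part_mult_homogeneous[OF assms(1)] by simp
    also have "\<dots> = 0"
      using assms(3) \<open>mdeg m \<noteq> d\<close> unfolding homogeneous_def by (intro homogeneous_part_eq_0) auto
    finally have "Poly_Mapping.lookup (homogeneous_part (mdeg m) p) m = 0"
      using assms(2) by simp
    with m show False by (simp add: lookup_homogeneous_part in_keys_iff)
  qed
qed

lemma total_degree_le_iff: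
  "total_degree p \<le> n \<longleftrightarrow> (\<forall>m\<in>Poly_Mapping.keys p. mdeg m \<le> n)"
  unfolding total_degree_def mdeg_def[symmetric] by (subst Max_le_iff) auto

lemma mdeg_le_total_degree: "Poly_Mapping.lookup p m \<noteq> 0 \<Longrightarrow> mdeg m \<le> total_degree p"
  unfolding total_degree_def mdeg_def[symmetric] by (rule Max_ge) (auto simp: in_keys_iff)

lemma total_degree_homogeneous:
  assumes "homogeneous d p" "p \<noteq> 0"
  shows "total_degree p = d"
proof -
  obtain m where m: "m \<in> Poly_Mapping.keys p"
    using assms(2) keys_eq_empty[of p] by blast
  have "total_degree p \<le> d"
    using assms(1) by (simp add: total_degree_le_iff homogeneous_def)
  moreover have "d \<le> total_degree p"
    using mdeg_le_total_degree[of p m] assms(1) m by (simp add: homogeneous_def in_keys_iff)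
  ultimately show ?thesis by simp
qed

lemma total_degree_add_le:
  "total_degree p \<le> n \<Longrightarrow> total_degree q \<le> n \<Longrightarrow> total_degree (p + q) \<le> n"
  unfolding total_degree_le_iff using keys_add[of p q] by blast

lemma total_degree_diff_le:
  "total_degree p \<le> n \<Longrightarrow> total_degree q \<le> n \<Longrightarrow> total_degree (p - q) \<le> n"
  unfolding total_degree_le_iff using keys_diff[of p q] by blast

lemma total_degree_uminus_le: "total_degree p \<le> n \<Longrightarrow> total_degree (- p) \<le> n"
  unfolding total_degree_le_iff by simp

lemma total_degree_mult_le:
  assumes "total_degree p \<le> a" "total_degree q \<le> b" "a + b \<le> n"
  shows "total_degree (p * q) \<le> n"
  unfolding total_degree_le_iff
proof
  fix m assume "m \<in> Poly_Mapping.keys (p * q)"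
  then obtain u v where "m = u + v" "u \<in> Poly_Mapping.keys p" "v \<in> Poly_Mapping.keys q"
    using keys_mult[of p q] by blast
  with assms show "mdeg m \<le> n" by (fastforce simp: total_degree_le_iff mdeg_add)
qed

lemma total_degree_Const_le: "total_degree (Const c) \<le> n"
  unfolding total_degree_le_iff Const_def by auto

lemma total_degree_Const_mult_le: "total_degree p \<le> n \<Longrightarrow> total_degree (Const c * p) \<le> n"
  using total_degree_mult_le[OF total_degree_Const_le[of c 0]] by simp

lemma total_degree_of_nat_mult_le: "total_degree p \<le> n \<Longrightarrow> total_degree (of_nat k * p) \<le> n"
  using total_degree_Const_mult_le[of p n "of_nat k"] by (simp add: Const_of_nat)

lemma total_degree_1_le: "total_degree 1 \<le> n"
  using total_degree_Const_le[of 1] by simp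

lemma total_degree_Var_le: "1 \<le> n \<Longrightarrow> total_degree (Var i) \<le> n"
  unfolding total_degree_le_iff Var_def by auto

lemma total_degree_power_le:
  "total_degree p \<le> a \<Longrightarrow> k * a \<le> n \<Longrightarrow> total_degree (p ^ k) \<le> n"
proof (induction k arbitrary: n)
  case 0
  then show ?case by (simp add: total_degree_1_le)
next
  case (Suc k)
  then show ?case
    unfolding power_Suc by (intro total_degree_mult_le[of p a "p ^ k" "k * a"]) auto
qed

lemma total_degree_sum_le:
  "(\<And>x. x \<in> A \<Longrightarrow> total_degree (f x) \<le> n) \<Longrightarrow> total_degree (sum f A) \<le> n"
  by (induction A rule: infinite_finite_induct)
    (simp_all add: total_degree_Const_le[of 0, simplified] total_degree_add_le)

lemma total_degree_prod_le:
  "(\<And>x. x \<in> A \<Longrightarrow> total_degree (f x) \<le> g x) \<Longrightarrow> sum g A \<le> n \<Longrightarrow> total_degree (prod f A) \<le> n"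
proof (induction A arbitrary: n rule: infinite_finite_induct)
  case (insert x F)
  then show ?case
    unfolding prod.insert[OF insert(1,2)]
    by (intro total_degree_mult_le[of _ "g x" _ "sum g F"]) auto
qed (simp_all add: total_degree_1_le)

lemma total_degree_linear_le:
  "total_degree (Var i - Var j) \<le> 1" "total_degree (Var i + Var j) \<le> 1"
  by (intro total_degree_diff_le total_degree_add_le total_degree_Var_le; simp)+

lemma total_degree_subst_le:
  assumes "\<And>i. total_degree (f i) \<le> 1"
  shows "total_degree (subst f p) \<le> total_degree p"
  unfolding subst_eq_sum_monomials
proof (rule total_degree_sum_le)
  fix m assume m: "m \<in> Poly_Mapping.keys p"
  have "total_degree (subst_monomial f m) \<le> mdeg m"
    unfolding subst_monomial_def mdeg_def
    by (rule total_degree_prod_le[where g = "Poly_Mapping.lookup m"])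
      (auto intro: total_degree_power_le[OF assms])
  with m show "total_degree (Const (Poly_Mapping.lookup p m) * subst_monomial f m) \<le> total_degree p"
    using mdeg_le_total_degree[of p m]
    by (intro total_degree_Const_mult_le) (auto simp: in_keys_iff)
qed

section \<open>Power series with polynomial coefficients\<close>

abbreviation Exp :: "mpoly \<Rightarrow> mpoly fps" where
  "Exp c \<equiv> exp_ser Const c"

lemma Exp_nth: "Exp c $ n = Const (1 / fact n) * c ^ n"
  by (simp add: exp_ser_def)

lemma of_nat_Suc_mult_Const_inverse_fact:
  "of_nat (Suc n) * Const (1 / fact (Suc n)) = Const (1 / fact n)"
proof -
  have "(of_nat (Suc n) * (1 / fact (Suc n)) :: rat) = 1 / fact n"
    by (simp add: field_simps del: of_nat_Suc)
  then show ?thesis by (simp add: Const_of_nat[symmetric] Const_mult)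
qed

lemma fps_deriv_Exp: "fps_deriv (Exp c) = fps_const c * Exp c"
proof (rule fps_ext)
  fix n
  have "fps_deriv (Exp c) $ n = (of_nat (Suc n) * Const (1 / fact (Suc n))) * c ^ Suc n"
    by (simp add: Exp_nth mult.assoc)
  also have "\<dots> = c * (Const (1 / fact n) * c ^ n)"
    by (simp only: of_nat_Suc_mult_Const_inverse_fact) (simp add: mult_ac)
  finally show "fps_deriv (Exp c) $ n = (fps_const c * Exp c) $ n"
    by (simp add: Exp_nth)
qed

lemma Exp_0: "Exp 0 = 1"
  by (rule fps_ext) (simp add: Exp_nth)

lemma Exp_add: "Exp a * Exp b = Exp (a + b)"
proof (rule fps_ext)
  fix n
  have "(Exp a * Exp b) $ n =
      (\<Sum>i=0..n. Const (1 / fact i) * a ^ i * (Const (1 / fact (n - i)) * b ^ (n - i)))"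
    by (simp add: fps_mult_nth Exp_nth)
  also have "\<dots> = (\<Sum>i=0..n. Const (1 / fact n) * (of_nat (n choose i) * a ^ i * b ^ (n - i)))"
  proof (rule sum.cong[OF refl])
    fix i assume "i \<in> {0..n}"
    then have "(1 / fact n) * of_nat (n choose i) = (1 / fact i) * (1 / fact (n - i) :: rat)"
      by (simp add: binomial_fact field_simps)
    then have "Const (1 / fact n) * of_nat (n choose i) = Const (1 / fact i) * Const (1 / fact (n - i))"
      by (simp add: Const_mult Const_of_nat[symmetric])
    then show "Const (1 / fact i) * a ^ i * (Const (1 / fact (n - i)) * b ^ (n - i)) =
        Const (1 / fact n) * (of_nat (n choose i) * a ^ i * b ^ (n - i))"
      by (simp add: algebra_simps)
  qed
  also have "\<dots> = Const (1 / fact n) * (a + b) ^ n"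
    by (simp add: binomial_ring sum_distrib_left atLeast0AtMost)
  finally show "(Exp a * Exp b) $ n = Exp (a + b) $ n" by (simp add: Exp_nth)
qed

definition fps_Const :: "rat fps \<Rightarrow> mpoly fps" where
  "fps_Const f = Abs_fps (\<lambda>n. Const (f $ n))"

lemma fps_Const_nth [simp]: "fps_Const f $ n = Const (f $ n)"
  by (simp add: fps_Const_def)

lemma fps_Const_mult: "fps_Const (f * g) = fps_Const f * fps_Const g"
  by (rule fps_ext) (simp add: fps_mult_nth Const_sum Const_mult)

lemma fps_Const_1: "fps_Const 1 = 1"
  by (rule fps_ext) simp

definition subst_fps :: "(nat \<Rightarrow> mpoly) \<Rightarrow> mpoly fps \<Rightarrow> mpoly fps" where
  "subst_fps g F = Abs_fps (\<lambda>n. subst g (F $ n))"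

lemma subst_fps_nth [simp]: "subst_fps g F $ n = subst g (F $ n)"
  by (simp add: subst_fps_def)

lemma subst_fps_mult: "subst_fps g (F * G) = subst_fps g F * subst_fps g G"
  by (rule fps_ext) (simp add: fps_mult_nth subst_sum subst_mult)

lemma subst_fps_diff: "subst_fps g (F - G) = subst_fps g F - subst_fps g G"
  by (rule fps_ext) (simp add: subst_diff)

lemma subst_fps_deriv: "subst_fps g (fps_deriv F) = fps_deriv (subst_fps g F)"
  by (rule fps_ext) (simp add: subst_mult del: of_nat_Suc)

lemma subst_fps_const: "subst_fps g (fps_const c) = fps_const (subst g c)"
  by (rule fps_ext) (simp add: fps_nth_fps_const)

lemma subst_fps_Exp: "subst_fps g (Exp c) = Exp (subst g c)"
  by (rule fps_ext) (simp add: Exp_nth subst_mult subst_power)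

lemma subst_fps_fps_Const: "subst_fps g (fps_Const f) = fps_Const f"
  by (rule fps_ext) simp

definition fps_vars_in :: "nat set \<Rightarrow> mpoly fps \<Rightarrow> bool" where
  "fps_vars_in S F \<longleftrightarrow> (\<forall>n. vars (F $ n) \<subseteq> S)"

lemma fps_vars_in_mult: "fps_vars_in S F \<Longrightarrow> fps_vars_in S G \<Longrightarrow> fps_vars_in S (F * G)"
  unfolding fps_vars_in_def by (simp add: fps_mult_nth vars_sum vars_mult)

lemma fps_vars_in_add: "fps_vars_in S F \<Longrightarrow> fps_vars_in S G \<Longrightarrow> fps_vars_in S (F + G)"
  unfolding fps_vars_in_def by (simp add: vars_add)

lemma fps_vars_in_diff: "fps_vars_in S F \<Longrightarrow> fps_vars_in S G \<Longrightarrow> fps_vars_in S (F - G)"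
  unfolding fps_vars_in_def by (simp add: vars_diff)

lemma fps_vars_in_const: "vars c \<subseteq> S \<Longrightarrow> fps_vars_in S (fps_const c)"
  unfolding fps_vars_in_def by (simp add: fps_nth_fps_const vars_0)

lemma fps_vars_in_Exp: "vars c \<subseteq> S \<Longrightarrow> fps_vars_in S (Exp c)"
  unfolding fps_vars_in_def by (simp add: Exp_nth vars_mult vars_Const vars_power)

lemma fps_vars_in_fps_Const: "fps_vars_in S (fps_Const f)"
  unfolding fps_vars_in_def by (simp add: vars_Const)

lemma fps_vars_in_deriv: "fps_vars_in S F \<Longrightarrow> fps_vars_in S (fps_deriv F)"
  unfolding fps_vars_in_def by (simp add: vars_mult vars_of_nat del: of_nat_Suc)

definition fps_degree_bound :: "nat \<Rightarrow> mpoly fps \<Rightarrow> bool" where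
  "fps_degree_bound c F \<longleftrightarrow> (\<forall>n. total_degree (F $ n) \<le> n + c)"

lemma fps_degree_bound_mult:
  assumes "fps_degree_bound c1 F" "fps_degree_bound c2 G"
  shows "fps_degree_bound (c1 + c2) (F * G)"
  unfolding fps_degree_bound_def fps_mult_nth
proof (intro allI total_degree_sum_le)
  fix n i :: nat assume "i \<in> {0..n}"
  moreover have "total_degree (F $ i) \<le> i + c1" "total_degree (G $ (n - i)) \<le> n - i + c2"
    using assms unfolding fps_degree_bound_def by blast+
  ultimately show "total_degree (F $ i * G $ (n - i)) \<le> n + (c1 + c2)"
    by (intro total_degree_mult_le) auto
qed

lemma fps_degree_bound_mono:
  "fps_degree_bound c F \<Longrightarrow> c \<le> d \<Longrightarrow> fps_degree_bound d F"
  unfolding fps_degree_bound_def by (meson add_left_mono order_trans)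

lemma fps_degree_bound_diff:
  "fps_degree_bound c F \<Longrightarrow> fps_degree_bound c G \<Longrightarrow> fps_degree_bound c (F - G)"
  unfolding fps_degree_bound_def by (simp add: total_degree_diff_le)

lemma fps_degree_bound_const_mult:
  "total_degree p \<le> e \<Longrightarrow> fps_degree_bound c F \<Longrightarrow> fps_degree_bound (c + e) (fps_const p * F)"
  unfolding fps_degree_bound_def by (auto intro: total_degree_mult_le)

lemma fps_degree_bound_deriv:
  "fps_degree_bound c F \<Longrightarrow> fps_degree_bound (c + 1) (fps_deriv F)"
  unfolding fps_degree_bound_def fps_deriv_nth
proof (intro allI)
  fix n assume "\<forall>n. total_degree (F $ n) \<le> n + c"
  from this[rule_format, of "n + 1"] have "total_degree (F $ (n + 1)) \<le> n + (c + 1)" by simp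
  then show "total_degree (of_nat (n + 1) * F $ (n + 1)) \<le> n + (c + 1)"
    by (rule total_degree_of_nat_mult_le)
qed

lemma fps_degree_bound_Exp: "total_degree c \<le> 1 \<Longrightarrow> fps_degree_bound 0 (Exp c)"
  unfolding fps_degree_bound_def Exp_nth
  by (auto intro!: total_degree_Const_mult_le total_degree_power_le)

lemma fps_degree_bound_fps_Const: "fps_degree_bound 0 (fps_Const f)"
  unfolding fps_degree_bound_def by (simp add: total_degree_Const_le)

lemma recurrence_solution_unique:
  fixes s :: "'a :: {ring_no_zero_divisors, semiring_char_0}"
  assumes "s \<noteq> 0"
    and X: "\<And>k. of_nat (k + 2) * s * X k = F k (if k = 0 then 0 else X (k - 1))"
    and Y: "\<And>k. of_nat (k + 2) * s * Y k = F k (if k = 0 then 0 else Y (k - 1))"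
  shows "X = Y"
proof
  have step: "X k = Y k" if "of_nat (k + 2) * s * X k = of_nat (k + 2) * s * Y k" for k
  proof -
    have "(of_nat (k + 2) :: 'a) \<noteq> 0"
      by (metis of_nat_eq_0_iff add_2_eq_Suc' nat.distinct(1))
    with \<open>s \<noteq> 0\<close> that show ?thesis by simp
  qed
  fix k show "X k = Y k"
  proof (induction k)
    case 0
    show ?case by (rule step) (simp only: X Y, simp)
  next
    case (Suc k)
    show ?case by (rule step) (simp only: X Y Suc.IH nat.distinct if_False diff_Suc_1)
  qed
qed

section \<open>The recurrence for A\<close>

text \<open>\<open>Gser D s w\<close> is \<open>(s (e^(Dz) - 1 - Dz) - w D z (e^(Dz) - 1)) / D\<^sup>2\<close>, written without
  the division so that its coefficients are visibly polynomials.\<close>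

definition Gser :: "mpoly \<Rightarrow> mpoly \<Rightarrow> mpoly \<Rightarrow> mpoly fps" where
  "Gser D s w = Abs_fps (\<lambda>n. if n < 2 then 0 else D ^ (n - 2) * (s - of_nat n * w) * Const (1 / fact n))"

lemma Gser_nth:
  "Gser D s w $ n = (if n < 2 then 0 else D ^ (n - 2) * (s - of_nat n * w) * Const (1 / fact n))"
  by (simp add: Gser_def)

lemma Gser_closed_form:
  "fps_const (D\<^sup>2) * Gser D s w =
     fps_const s * Exp D - fps_const (w * D) * (fps_X * Exp D) - fps_const s - fps_const ((s - w) * D) * fps_X"
proof (rule fps_ext)
  fix n
  consider "n = 0" | "n = 1" | m where "n = Suc (Suc m)"
    by (metis One_nat_def not0_implies_Suc)
  then show "(fps_const (D\<^sup>2) * Gser D s w) $ n = (fps_const s * Exp D - fps_const (w * D) * (fps_X * Exp D)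
      - fps_const s - fps_const ((s - w) * D) * fps_X) $ n"
  proof cases
    case 3
    have "Const (1 / fact (Suc m)) = of_nat (Suc (Suc m)) * Const (1 / fact (Suc (Suc m)))"
      using of_nat_Suc_mult_Const_inverse_fact[of "Suc m"] by simp
    with 3 show ?thesis
      by (simp add: Gser_nth Exp_nth del: of_nat_Suc fact_Suc) (simp add: algebra_simps power2_eq_square)
  qed (simp_all add: Gser_nth Exp_nth algebra_simps)
qed

lemma Gser_ode_ring_identity:
  fixes K Y Y' S W D L X E0 E1 :: "'a :: comm_ring_1"
  assumes "K = D\<^sup>2"
    and "K * Y = S * E1 - W * D * (X * E1) - S * E0 - (S - W) * D * X * E0"
    and "K * Y' = S * ((L + D) * E1) - W * D * (E1 + X * ((L + D) * E1))
                  - S * (L * E0) - (S - W) * D * (E0 + X * (L * E0))"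
  shows "K * (S * Y' - (S * L + (S - W) * D) * Y) = K * (- (X * (W\<^sup>2 * E1 - (S - W)\<^sup>2 * E0)))"
proof -
  have "K * (S * Y' - (S * L + (S - W) * D) * Y) = S * (K * Y') - (S * L + (S - W) * D) * (K * Y)"
    by (simp add: algebra_simps)
  also have "\<dots> = K * (- (X * (W\<^sup>2 * E1 - (S - W)\<^sup>2 * E0)))"
    unfolding assms(2,3) by (simp add: assms(1) algebra_simps power2_eq_square)
  finally show ?thesis .
qed

lemma Exp_mult_Gser_ode:
  assumes q: "q = s * lam + (s - w) * D" and "D \<noteq> 0"
  shows "fps_const s * fps_deriv (Exp lam * Gser D s w) - fps_const q * (Exp lam * Gser D s w)
       = - (fps_X * (fps_const (w\<^sup>2) * Exp (lam + D) - fps_const ((s - w)\<^sup>2) * Exp lam))"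
proof -
  let ?S = "fps_const s" and ?W = "fps_const w" and ?D = "fps_const D" and ?L = "fps_const lam"
  let ?Y = "Exp lam * Gser D s w" and ?E1 = "Exp (lam + D)" and ?E0 = "Exp lam"
  have "?D\<^sup>2 * ?Y = ?E0 * (fps_const (D\<^sup>2) * Gser D s w)"
    by (simp add: mult_ac)
  also have "\<dots> = ?S * (?E0 * Exp D) - ?W * ?D * (fps_X * (?E0 * Exp D))
      - ?S * ?E0 - (?S - ?W) * ?D * fps_X * ?E0"
    unfolding Gser_closed_form by (simp add: algebra_simps)
  finally have KY: "?D\<^sup>2 * ?Y = ?S * ?E1 - ?W * ?D * (fps_X * ?E1) - ?S * ?E0 - (?S - ?W) * ?D * fps_X * ?E0"
    by (simp only: Exp_add)
  have "?D\<^sup>2 * fps_deriv ?Y = fps_deriv (?D\<^sup>2 * ?Y)"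
    by (simp add: fps_deriv_mult_const_left)
  also have "\<dots> = ?S * ((?L + ?D) * ?E1) - ?W * ?D * (?E1 + fps_X * ((?L + ?D) * ?E1))
      - ?S * (?L * ?E0) - (?S - ?W) * ?D * (?E0 + fps_X * (?L * ?E0))"
    unfolding KY by (simp add: fps_deriv_Exp fps_deriv_mult_const_left) (simp add: algebra_simps)
  finally have "?D\<^sup>2 * (?S * fps_deriv ?Y - (?S * ?L + (?S - ?W) * ?D) * ?Y)
      = ?D\<^sup>2 * (- (fps_X * (?W\<^sup>2 * ?E1 - (?S - ?W)\<^sup>2 * ?E0)))"
    by (intro Gser_ode_ring_identity[OF refl KY])
  with \<open>D \<noteq> 0\<close> show ?thesis
    by (simp only: mult_cancel_left) (simp add: q)
qed

abbreviation sA :: mpoly where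
  "sA \<equiv> Xa - Xb + Xc - Xd"

abbreviation qA :: mpoly where
  "qA \<equiv> half * (Xa\<^sup>2 - Xb\<^sup>2 + Xc\<^sup>2 - Xd\<^sup>2)"

definition A_recurrence :: "(nat \<Rightarrow> mpoly) \<Rightarrow> bool" where
  "A_recurrence A \<longleftrightarrow>
     (\<forall>k. of_nat (k + 2) * sA * A k = qA * (if k = 0 then 0 else A (k - 1)) - P k)"

definition P_gen :: "mpoly fps" where
  "P_gen =
     fps_const ((Xa - Xb)\<^sup>2) * (Exp (half * (- Xa + Xb + Xc + Xd)) - Exp (half * (Xa - Xb + Xc + Xd)))
   + fps_const ((Xc - Xd)\<^sup>2) * (Exp (half * (Xa + Xb - Xc + Xd)) - Exp (half * (Xa + Xb + Xc - Xd)))"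

lemma P_gen_nth: "P_gen $ k = P k"
proof -
  have "Const (1 / (fact k * 2 ^ k)) = Const (1 / fact k) * half ^ k"
    by (simp add: Const_power[symmetric] Const_mult power_one_over)
  then have coeff: "(fps_const c * (Exp (half * L) - Exp (half * M))) $ k =
      Const (1 / (fact k * 2 ^ k)) * (c * (L ^ k - M ^ k))" for c L M
    by (simp add: Exp_nth power_mult_distrib algebra_simps)
  show ?thesis
    unfolding P_gen_def P_def fps_add_nth coeff by (rule distrib_left[symmetric])
qed

definition A_gen :: "mpoly fps" where
  "A_gen = Exp (half * (Xa + Xb + Xc - Xd)) * Gser (Xd - Xa) sA (Xa - Xb)
         + Exp (half * (Xa - Xb + Xc + Xd)) * Gser (Xb - Xc) sA (Xc - Xd)"

lemma A_gen_ode: "fps_const sA * fps_deriv A_gen - fps_const qA * A_gen = - (fps_X * P_gen)"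
proof -
  have "qA = half * (sA * (Xa + Xb + Xc - Xd) + 2 * ((sA - (Xa - Xb)) * (Xd - Xa)))"
    "qA = half * (sA * (Xa - Xb + Xc + Xd) + 2 * ((sA - (Xc - Xd)) * (Xb - Xc)))"
    by (simp_all add: algebra_simps power2_eq_square)
  then have q_split: "qA = sA * (half * (Xa + Xb + Xc - Xd)) + (sA - (Xa - Xb)) * (Xd - Xa)"
    "qA = sA * (half * (Xa - Xb + Xc + Xd)) + (sA - (Xc - Xd)) * (Xb - Xc)"
    by (simp_all only: half_mult_add_double mult.left_commute[of half])
  have "Xd - Xa \<noteq> 0" "Xb - Xc \<noteq> 0"
    by (intro Var_diff_neq_0; simp)+
  note odes = Exp_mult_Gser_ode[OF q_split(1) this(1)] Exp_mult_Gser_ode[OF q_split(2) this(2)]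
  have exps: "half * (Xa + Xb + Xc - Xd) + (Xd - Xa) = half * (- Xa + Xb + Xc + Xd)"
    "half * (Xa - Xb + Xc + Xd) + (Xb - Xc) = half * (Xa + Xb - Xc + Xd)"
    unfolding half_mult_add_double[symmetric] by (simp_all add: algebra_simps)
  have "sA - (Xa - Xb) = Xc - Xd" "sA - (Xc - Xd) = Xa - Xb"
    by simp_all
  with odes show ?thesis
    unfolding A_gen_def P_gen_def exps by (simp add: algebra_simps fps_deriv_add)
qed

definition A_sol :: "nat \<Rightarrow> mpoly" where
  "A_sol k = A_gen $ (k + 2)"

lemma A_recurrence_A_sol: "A_recurrence A_sol"
  unfolding A_recurrence_def
proof
  fix k
  have "A_gen $ Suc k = (if k = 0 then 0 else A_sol (k - 1))"
    by (cases k) (simp_all add: A_gen_def Gser_nth A_sol_def)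
  moreover have "(fps_const sA * fps_deriv A_gen - fps_const qA * A_gen) $ Suc k
      = sA * (of_nat (k + 2) * A_sol k) - qA * A_gen $ Suc k"
    by (simp add: A_sol_def numeral_2_eq_2 del: of_nat_Suc)
  ultimately have "sA * (of_nat (k + 2) * A_sol k) - qA * (if k = 0 then 0 else A_sol (k - 1)) = - P k"
    by (simp only: A_gen_ode fps_neg_nth fps_X_mult_nth P_gen_nth nat.distinct if_False diff_Suc_1)
  then show "of_nat (k + 2) * sA * A_sol k = qA * (if k = 0 then 0 else A_sol (k - 1)) - P k"
    by (simp add: algebra_simps)
qed

lemma vars_A_sol: "vars (A_sol k) \<subseteq> {0, 1, 2, 3}"
proof -
  have Gser: "fps_vars_in S (Gser D s w)" if "vars D \<subseteq> S" "vars s \<subseteq> S" "vars w \<subseteq> S" for S D s w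
    using that unfolding fps_vars_in_def Gser_nth by (simp add: vars_intros)
  have "fps_vars_in {0, 1, 2, 3} A_gen"
    unfolding A_gen_def by (intro fps_vars_in_add fps_vars_in_mult fps_vars_in_Exp Gser vars_intros; simp)
  then show ?thesis unfolding fps_vars_in_def A_sol_def by blast
qed

lemma sA_neq_0: "sA \<noteq> 0"
proof
  assume "sA = 0"
  then have "Poly_Mapping.lookup sA (Poly_Mapping.single 0 1) = 0" by simp
  then show False
    by (simp add: Var_def lookup_minus lookup_add lookup_single when_def single_Suc_0_eq_iff)
qed

lemma A_recurrence_unique: "A_recurrence A \<Longrightarrow> A = A_sol"
  using A_recurrence_A_sol sA_neq_0
  unfolding A_recurrence_def
  by (intro recurrence_solution_unique[where s = sA and F = "\<lambda>k x. qA * x - P k"]) simp_all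

lemma homogeneous_P: "homogeneous (k + 2) (P k)"
  unfolding P_def
  by (intro homogeneous_Const_mult homogeneous_add homogeneous_mult[where d = 2 and e = k]
      homogeneous_diff homogeneous_power[where d = 1] homogeneous_uminus homogeneous_Var; simp)

lemma A_recurrence_homogeneous:
  assumes "A_recurrence A"
  shows "homogeneous (k + 1) (A k)"
proof -
  have step: "homogeneous (k + 1) (A k)"
    if "homogeneous (k + 2) (qA * (if k = 0 then 0 else A (k - 1)) - P k)" for k
  proof -
    have "of_nat (k + 2) * (sA * A k) = qA * (if k = 0 then 0 else A (k - 1)) - P k"
      using assms unfolding A_recurrence_def by (metis mult.assoc)
    with that have "homogeneous (k + 2) (sA * A k)"
      by (metis homogeneous_of_nat_mult_iff add_2_eq_Suc' nat.distinct(1))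
    then have "homogeneous (k + 1 + 1) (sA * A k)"
      by simp
    moreover have "homogeneous 1 sA"
      by (intro homogeneous_add homogeneous_diff homogeneous_Var)
    ultimately show ?thesis
      using homogeneous_mult_cancel sA_neq_0 by blast
  qed
  have qA: "homogeneous 2 qA"
    by (intro homogeneous_Const_mult homogeneous_add homogeneous_diff
        homogeneous_power[where d = 1] homogeneous_Var; simp)
  show ?thesis
  proof (induction k)
    case 0
    show ?case by (rule step) (simp add: homogeneous_uminus homogeneous_P[of 0, simplified])
  next
    case (Suc k)
    show ?case
      by (rule step, simp only: nat.distinct if_False diff_Suc_1,
          rule homogeneous_diff[OF homogeneous_mult[OF qA Suc.IH] homogeneous_P]) simp
  qed
qed

definition d_elim :: "nat \<Rightarrow> mpoly" where
  "d_elim i = (if i = 3 then Xa + Xc - Xb else Var i)"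

lemma d_elim_simps [simp]:
  "d_elim 0 = Xa" "d_elim (Suc 0) = Xb" "d_elim 2 = Xc" "d_elim 3 = Xa + Xc - Xb"
  by (simp_all add: d_elim_def)

lemma subst_d_elim_sA: "subst d_elim sA = 0"
  by (simp add: subst_simps)

lemma subst_d_elim_qA: "subst d_elim qA = (Xa - Xb) * (Xb - Xc)"
proof -
  have "subst d_elim qA = half * (2 * ((Xa - Xb) * (Xb - Xc)))"
    by (simp add: subst_simps algebra_simps power2_eq_square)
  then show ?thesis
    by (simp only: half_mult_double)
qed

lemma subst_P:
  "subst f (P n) = Const (1 / (fact n * 2 ^ n)) *
     ((subst f (Xa - Xb))\<^sup>2 * (subst f (- Xa + Xb + Xc + Xd) ^ n - subst f (Xa - Xb + Xc + Xd) ^ n)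
      + (subst f (Xc - Xd))\<^sup>2 * (subst f (Xa + Xb - Xc + Xd) ^ n - subst f (Xa + Xb + Xc - Xd) ^ n))"
  unfolding P_def by (simp only: subst_simps subst_Const)

lemma subst_d_elim_P:
  "subst d_elim (P n) = Const (1 / fact n) * (Xa - Xb)\<^sup>2 * (Xa ^ n - Xb ^ n + Xc ^ n - (Xa + Xc - Xb) ^ n)"
proof -
  have lin: "subst d_elim (Xa - Xb) = Xa - Xb" "subst d_elim (Xc - Xd) = - (Xa - Xb)"
    "subst d_elim (- Xa + Xb + Xc + Xd) = 2 * Xc"
    "subst d_elim (Xa - Xb + Xc + Xd) = 2 * (Xa + Xc - Xb)"
    "subst d_elim (Xa + Xb - Xc + Xd) = 2 * Xa"
    "subst d_elim (Xa + Xb + Xc - Xd) = 2 * Xb"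
    by (simp add: subst_simps; simp add: algebra_simps mult_2)+
  have "subst d_elim (P n) = Const (1 / (fact n * 2 ^ n)) *
      ((Xa - Xb)\<^sup>2 * (2 ^ n * Xc ^ n - 2 ^ n * (Xa + Xc - Xb) ^ n)
       + (Xa - Xb)\<^sup>2 * (2 ^ n * Xa ^ n - 2 ^ n * Xb ^ n))"
    unfolding subst_P lin by (simp only: power_mult_distrib power2_minus)
  also have "\<dots> = (Const (1 / (fact n * 2 ^ n)) * 2 ^ n) * (Xa - Xb)\<^sup>2 *
      (Xa ^ n - Xb ^ n + Xc ^ n - (Xa + Xc - Xb) ^ n)"
    by (simp only: ring_distribs mult_ac diff_add_eq add_diff_eq diff_diff_eq2 add_ac)
  also have "Const (1 / (fact n * 2 ^ n)) * 2 ^ n = Const (1 / fact n)"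
    by (simp add: Const_numeral[symmetric] Const_power[symmetric] Const_mult)
  finally show ?thesis .
qed

lemma A_recurrence_subst_d_elim:
  assumes "A_recurrence A"
  shows "(Xb - Xc) * subst d_elim (A k) =
    Const (1 / fact (k + 1)) * (Xa - Xb) * (Xa ^ (k + 1) - Xb ^ (k + 1) + Xc ^ (k + 1) - (Xa + Xc - Xb) ^ (k + 1))"
proof -
  let ?Q = "Xa ^ (k + 1) - Xb ^ (k + 1) + Xc ^ (k + 1) - (Xa + Xc - Xb) ^ (k + 1)"
  have "of_nat (Suc k + 2) * sA * A (Suc k) = qA * A k - P (Suc k)"
    using assms[unfolded A_recurrence_def, rule_format, of "Suc k"]
    by (simp only: nat.distinct if_False diff_Suc_1)
  then have "of_nat (k + 1 + 2) * sA * A (k + 1) = qA * A k - P (k + 1)"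
    by (simp only: Suc_eq_plus1)
  then have "subst d_elim (of_nat (k + 1 + 2) * sA * A (k + 1)) = subst d_elim (qA * A k - P (k + 1))"
    by (rule arg_cong)
  moreover have "subst d_elim (of_nat (k + 1 + 2) * sA * A (k + 1)) = 0"
    by (simp only: subst_mult[of d_elim "of_nat (k + 1 + 2) * sA"]
        subst_mult[of d_elim "of_nat (k + 1 + 2)" sA] subst_d_elim_sA mult_zero_right mult_zero_left)
  moreover have "subst d_elim (qA * A k - P (k + 1)) =
      (Xa - Xb) * (Xb - Xc) * subst d_elim (A k) - subst d_elim (P (k + 1))"
    by (simp only: subst_diff[of d_elim "qA * A k"] subst_mult[of d_elim qA] subst_d_elim_qA)
  ultimately have "(Xa - Xb) * ((Xb - Xc) * subst d_elim (A k)) = subst d_elim (P (k + 1))"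
    by (metis eq_iff_diff_eq_0 mult.assoc)
  then have "(Xa - Xb) * ((Xb - Xc) * subst d_elim (A k)) = (Xa - Xb) * (Const (1 / fact (k + 1)) * (Xa - Xb) * ?Q)"
    unfolding subst_d_elim_P by (simp only: power2_eq_square mult_ac)
  then show ?thesis
    using Var_diff_neq_0[of 0 1] by simp
qed

lemma A_recurrence_neq_0:
  assumes "A_recurrence A" "k \<ge> 1"
  shows "A k \<noteq> 0"
proof
  assume "A k = 0"
  let ?n = "k + 1" and ?at_101 = "\<lambda>i. Const (if i = 0 \<or> i = 2 then 1 else 0)"
  have "Const (1 / fact ?n) * (Xa - Xb) * (Xa ^ ?n - Xb ^ ?n + Xc ^ ?n - (Xa + Xc - Xb) ^ ?n) = 0"
    using A_recurrence_subst_d_elim[OF assms(1), of k] \<open>A k = 0\<close> by simp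
  then have "subst ?at_101
      (Const (1 / fact ?n) * (Xa - Xb) * (Xa ^ ?n - Xb ^ ?n + Xc ^ ?n - (Xa + Xc - Xb) ^ ?n)) = 0"
    by (metis subst_0)
  then have "Const (1 / fact ?n * (2 - 2 ^ ?n)) = 0"
    by (simp add: subst_simps Const_numeral[symmetric] Const_power[symmetric] Const_mult Const_diff)
  then have "(2::rat) ^ ?n = 2" by simp
  moreover have "(2::rat) ^ ?n \<ge> 2 ^ 2"
    using assms(2) by (intro power_increasing) auto
  ultimately show False by simp
qed

lemma A_recurrence_total_degree:
  assumes "A_recurrence A" "k \<ge> 1"
  shows "total_degree (A k) = k + 1"
  using A_recurrence_homogeneous[OF assms(1)] A_recurrence_neq_0[OF assms]
  by (rule total_degree_homogeneous)

section \<open>The recurrence for B\<close>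

definition sinh_half_div_X :: "rat fps" where
  "sinh_half_div_X = Abs_fps (\<lambda>n. if even n then 1 / (2 ^ (n + 1) * fact (n + 1)) else 0)"

definition X_div_sinh_half :: "rat fps" where
  "X_div_sinh_half = inverse sinh_half_div_X"

lemma sinh_half_div_X_nth:
  "sinh_half_div_X $ n = (if even n then 1 / (2 ^ (n + 1) * fact (n + 1)) else 0)"
  by (simp add: sinh_half_div_X_def)

lemma X_div_sinh_half_mult: "X_div_sinh_half * sinh_half_div_X = 1"
  unfolding X_div_sinh_half_def by (rule inverse_mult_eq_1) (simp add: sinh_half_div_X_nth)

lemma sinh_half_id: "sinh_half id = fps_X * sinh_half_div_X"
  by (rule fps_ext) (auto simp: sinh_half_def sinh_half_div_X_nth fps_X_mult_nth)

lemma sinh_half_Const: "sinh_half Const = fps_X * fps_Const sinh_half_div_X"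
  by (rule fps_ext) (auto simp: sinh_half_def sinh_half_div_X_nth fps_X_mult_nth)

lemma the_mult_right_eq:
  fixes b :: "'a :: ring_no_zero_divisors"
  assumes "b \<noteq> 0" "x * b = c"
  shows "(THE f. f * b = c) = x"
  using assms by (intro the_equality) auto

lemma sinh_half_neq_0: "sinh_half emb \<noteq> 0" if "emb (1/2) \<noteq> 0"
proof
  assume "sinh_half emb = 0"
  then have "sinh_half emb $ 1 = 0" by simp
  with that show False by (simp add: sinh_half_def)
qed

lemma X_div_sinh_half_nth: "X_div_sinh_half $ k = 2 * beta k"
proof -
  have "fps_const (1/2) * X_div_sinh_half * sinh_half id = fps_const (1/2) * fps_X"
    unfolding sinh_half_id using X_div_sinh_half_mult by (simp add: mult_ac)
  then have "(THE f. f * sinh_half id = fps_const (1/2) * fps_X) = fps_const (1/2) * X_div_sinh_half"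
    by (intro the_mult_right_eq sinh_half_neq_0) simp_all
  then show ?thesis
    unfolding beta_def by simp
qed

lemma X_div_sinh_half_nth_012:
  "X_div_sinh_half $ 0 = 2" "X_div_sinh_half $ 1 = 0" "X_div_sinh_half $ 2 = -1/12"
proof -
  let ?M = X_div_sinh_half and ?S = sinh_half_div_X
  have c: "(?M * ?S) $ n = (if n = 0 then 1 else 0)" for n
    using X_div_sinh_half_mult by simp
  have S: "?S $ 0 = 1/2" "?S $ 1 = 0" "?S $ 2 = 1/48"
    by (simp_all add: sinh_half_div_X_nth fact_numeral)
  show m0: "?M $ 0 = 2"
    using c[of 0] S by simp
  show m1: "?M $ 1 = 0"
    using c[of 1] S m0 by (simp add: fps_mult_nth_1)
  have "(?M * ?S) $ 2 = ?M $ 0 * ?S $ 2 + ?M $ 1 * ?S $ 1 + ?M $ 2 * ?S $ 0"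
    by (simp add: fps_mult_nth numeral_2_eq_2)
  then show "?M $ 2 = -1/12"
    using c[of 2] S m0 m1 by simp
qed

definition expm1_quot :: "mpoly fps" where
  "expm1_quot = Abs_fps (\<lambda>n. Const (1 / fact (n + 1)) * (- (Xa - Xb)) ^ n)"

lemma expm1_quot_nth: "expm1_quot $ n = Const (1 / fact (n + 1)) * (- (Xa - Xb)) ^ n"
  by (simp add: expm1_quot_def)

lemma one_minus_Exp: "1 - Exp (- (Xa - Xb)) = fps_const (Xa - Xb) * (fps_X * expm1_quot)"
proof (rule fps_ext)
  fix n
  show "(1 - Exp (- (Xa - Xb))) $ n = (fps_const (Xa - Xb) * (fps_X * expm1_quot)) $ n"
    by (cases n) (simp_all add: Exp_nth expm1_quot_nth algebra_simps)
qed

definition Rquot_cofactor :: "mpoly fps" where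
  "Rquot_cofactor = expm1_quot * fps_Const X_div_sinh_half"

lemma Rquot_eq: "Rquot = fps_const (Xa - Xb) * Rquot_cofactor"
proof -
  have "fps_const (Xa - Xb) * Rquot_cofactor * sinh_half Const = 1 - Exp (- (Xa - Xb))"
    unfolding Rquot_cofactor_def sinh_half_Const one_minus_Exp
    by (simp add: mult_ac flip: fps_Const_mult) (simp add: X_div_sinh_half_mult fps_Const_1)
  then show ?thesis
    unfolding Rquot_def by (intro the_mult_right_eq sinh_half_neq_0) simp_all
qed

lemma Rop_const_mult: "Rop (fps_const c * G) = fps_const c * Rop G"
  unfolding Rop_def Let_def by (simp add: fps_deriv_mult_const_left algebra_simps)

definition RT_quot :: "nat \<Rightarrow> mpoly" where
  "RT_quot k = (Exp (half * (Xa - Xb)) * Rop Rquot_cofactor) $ k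
     - Const (2 / (3 * fact k)) * (Xa\<^sup>2 + Xa * Xb + Xb\<^sup>2 - Const (1/4)) * (half * (Xa + Xb)) ^ k"

lemma R_plus_T: "R k + T k = (Xa - Xb) * RT_quot k"
proof -
  have R: "R k = (Xa - Xb) * (Exp (half * (Xa - Xb)) * Rop Rquot_cofactor) $ k"
    unfolding R_def Rquot_eq Rop_const_mult by (simp add: mult.left_commute[of "Exp _"])
  have "Xb * (Xb\<^sup>2 - Const (1/4)) - Xa * (Xa\<^sup>2 - Const (1/4)) =
      - (Xa - Xb) * (Xa\<^sup>2 + Xa * Xb + Xb\<^sup>2 - Const (1/4))"
    by (simp add: algebra_simps power2_eq_square power3_eq_cube)
  then have T: "T k = - (Xa - Xb) * (Const (2 / (3 * fact k)) *
      (Xa\<^sup>2 + Xa * Xb + Xb\<^sup>2 - Const (1/4)) * (half * (Xa + Xb)) ^ k)"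
    unfolding T_def by (simp add: mult_ac)
  show ?thesis
    unfolding R T RT_quot_def by (simp add: algebra_simps)
qed

definition B_recurrence :: "(nat \<Rightarrow> mpoly) \<Rightarrow> bool" where
  "B_recurrence B \<longleftrightarrow> (\<forall>k. of_nat (k + 2) * (Xa - Xb) * B k =
     half * (Xa\<^sup>2 - Xb\<^sup>2) * (if k = 0 then 0 else B (k - 1)) - R k - T k)"

fun B_sol :: "nat \<Rightarrow> mpoly" where
  "B_sol 0 = Const (-1/2) * RT_quot 0"
| "B_sol (Suc k) = Const (1 / of_nat (k + 3)) * (half * (Xa + Xb) * B_sol k - RT_quot (Suc k))"

lemma B_recurrence_B_sol: "B_recurrence B_sol"
  unfolding B_recurrence_def
proof
  fix k
  have "of_nat (k + 2) * (Xa - Xb) * B_sol k =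
      half * (Xa\<^sup>2 - Xb\<^sup>2) * (if k = 0 then 0 else B_sol (k - 1)) - (Xa - Xb) * RT_quot k"
  proof (cases k)
    case 0
    have "of_nat (0 + 2) * (Xa - Xb) * B_sol 0 = (of_nat 2 * Const (-1/2)) * ((Xa - Xb) * RT_quot 0)"
      by (simp only: B_sol.simps add_0 mult_ac)
    also have "of_nat 2 * Const (-1/2) = (-1 :: mpoly)"
      by (simp add: Const_of_nat[symmetric] Const_mult flip: Const_uminus)
    finally show ?thesis
      using 0 by simp
  next
    case (Suc j)
    have "of_nat (Suc j + 2) * (Xa - Xb) * B_sol (Suc j) = (of_nat (j + 3) * Const (1 / of_nat (j + 3)))
        * ((Xa - Xb) * (half * (Xa + Xb) * B_sol j - RT_quot (Suc j)))"
      by (simp only: B_sol.simps add_Suc add_Suc_right numeral_3_eq_3 numeral_2_eq_2 mult_ac)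
    also have "of_nat (j + 3) * Const (1 / of_nat (j + 3)) = (1 :: mpoly)"
      by (simp add: Const_of_nat[symmetric] Const_mult del: of_nat_add)
    also have "(Xa - Xb) * (half * (Xa + Xb) * B_sol j - RT_quot (Suc j))
        = half * (Xa\<^sup>2 - Xb\<^sup>2) * B_sol j - (Xa - Xb) * RT_quot (Suc j)"
      by (simp add: algebra_simps power2_eq_square)
    finally show ?thesis
      using Suc by simp
  qed
  then show "of_nat (k + 2) * (Xa - Xb) * B_sol k =
      half * (Xa\<^sup>2 - Xb\<^sup>2) * (if k = 0 then 0 else B_sol (k - 1)) - R k - T k"
    by (simp only: diff_diff_eq R_plus_T)
qed

lemma B_recurrence_unique: "B_recurrence B \<Longrightarrow> B = B_sol"
  using B_recurrence_B_sol Var_diff_neq_0[of 0 1]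
  unfolding B_recurrence_def
  by (intro recurrence_solution_unique[where s = "Xa - Xb" and F = "\<lambda>k x. half * (Xa\<^sup>2 - Xb\<^sup>2) * x - R k - T k"])
    simp_all

lemma vars_B_sol: "vars (B_sol k) \<subseteq> {0, 1}"
proof -
  have "fps_vars_in {0, 1} expm1_quot"
    unfolding fps_vars_in_def expm1_quot_nth by (intro allI vars_intros; simp)
  then have "fps_vars_in {0, 1} Rquot_cofactor"
    unfolding Rquot_cofactor_def by (intro fps_vars_in_mult fps_vars_in_fps_Const)
  then have "fps_vars_in {0, 1} (Exp (half * (Xa - Xb)) * Rop Rquot_cofactor)"
    unfolding Rop_def Let_def
    by (intro fps_vars_in_mult fps_vars_in_Exp fps_vars_in_diff fps_vars_in_const fps_vars_in_deriv vars_intros; simp)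
  then have "vars (RT_quot k) \<subseteq> {0, 1}" for k
    unfolding RT_quot_def fps_vars_in_def by (intro vars_intros; simp)
  then show ?thesis
    by (induction k) (simp_all add: vars_intros)
qed

lemma fps_degree_bound_Rop:
  assumes "fps_degree_bound c G"
  shows "fps_degree_bound (c + 2) (Rop G)"
proof -
  let ?L = "\<lambda>H. fps_const Xb * H - fps_deriv H"
  have L: "fps_degree_bound (d + 1) (?L H)" if "fps_degree_bound d H" for d H
    by (intro fps_degree_bound_diff fps_degree_bound_const_mult fps_degree_bound_deriv
        total_degree_Var_le that order_refl)
  have LL: "fps_degree_bound (c + 1 + 1) (?L (?L G))"
    by (intro L assms)
  have "total_degree ((Xa - Xb)\<^sup>2) \<le> 2"
    by (intro total_degree_power_le[where a = 1] total_degree_linear_le) simp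
  note M = fps_degree_bound_const_mult[OF this assms]
  show ?thesis
    unfolding Rop_def Let_def by (rule fps_degree_bound_diff[OF fps_degree_bound_mono[OF LL] M]) simp

qed

lemma total_degree_RT_quot_le: "total_degree (RT_quot k) \<le> k + 2"
proof -
  have "fps_degree_bound 0 expm1_quot"
    unfolding fps_degree_bound_def expm1_quot_nth
    by (intro allI total_degree_Const_mult_le total_degree_power_le[where a = 1]
        total_degree_uminus_le total_degree_linear_le) auto
  then have "fps_degree_bound (0 + 0) Rquot_cofactor"
    unfolding Rquot_cofactor_def by (intro fps_degree_bound_mult fps_degree_bound_fps_Const)
  then have "fps_degree_bound (0 + 2) (Rop Rquot_cofactor)"
    by (intro fps_degree_bound_Rop) simp
  then have "fps_degree_bound (0 + (0 + 2)) (Exp (half * (Xa - Xb)) * Rop Rquot_cofactor)"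
    by (intro fps_degree_bound_mult fps_degree_bound_Exp total_degree_Const_mult_le total_degree_linear_le)
  then have "total_degree ((Exp (half * (Xa - Xb)) * Rop Rquot_cofactor) $ k) \<le> k + 2"
    unfolding fps_degree_bound_def by simp
  moreover have "total_degree (Const (2 / (3 * fact k)) * (Xa\<^sup>2 + Xa * Xb + Xb\<^sup>2 - Const (1/4))
      * (half * (Xa + Xb)) ^ k) \<le> k + 2"
    by (intro total_degree_mult_le[where a = 2 and b = k] total_degree_Const_mult_le total_degree_diff_le
        total_degree_add_le total_degree_power_le[where a = 1] total_degree_Var_le total_degree_Const_le
        total_degree_linear_le total_degree_mult_le[where a = 1 and b = 1]) auto
  ultimately show ?thesis
    unfolding RT_quot_def by (rule total_degree_diff_le)
qed

lemma total_degree_B_sol_le: "total_degree (B_sol k) \<le> k + 2"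
proof (induction k)
  case 0
  then show ?case using total_degree_RT_quot_le[of 0] by (simp add: total_degree_Const_mult_le)
next
  case (Suc k)
  have "total_degree (half * (Xa + Xb) * B_sol k - RT_quot (Suc k)) \<le> Suc k + 2"
    by (intro total_degree_diff_le total_degree_RT_quot_le total_degree_mult_le[OF _ Suc, where a = 1]
        total_degree_Const_mult_le total_degree_linear_le) auto
  then show ?case by (simp add: total_degree_Const_mult_le del: of_nat_add)
qed

lemma Rquot_cofactor_nth_012:
  "Rquot_cofactor $ 0 = 2" "Rquot_cofactor $ 1 = - (Xa - Xb)"
  "Rquot_cofactor $ 2 = Const (-1/12) + Const (1/6) * (Xa - Xb)\<^sup>2 * 2"
proof -
  have two: "Const 2 = (2 :: mpoly)"
    by (simp add: Const_numeral)
  show "Rquot_cofactor $ 0 = 2"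
    unfolding Rquot_cofactor_def using X_div_sinh_half_nth_012 by (simp add: expm1_quot_nth two)
  have "Rquot_cofactor $ 1 = (Const (1/2) * Const 2) * (- (Xa - Xb))"
    unfolding Rquot_cofactor_def using X_div_sinh_half_nth_012
    by (simp add: fps_mult_nth_1 expm1_quot_nth)
  then show "Rquot_cofactor $ 1 = - (Xa - Xb)"
    by (simp add: Const_mult)
  show "Rquot_cofactor $ 2 = Const (-1/12) + Const (1/6) * (Xa - Xb)\<^sup>2 * 2"
    unfolding Rquot_cofactor_def using X_div_sinh_half_nth_012
    by (simp add: fps_mult_nth numeral_2_eq_2 expm1_quot_nth two fact_numeral; simp add: algebra_simps)
qed

lemma RT_quot_0: "RT_quot 0 = - 2 * (Xa - Xb)\<^sup>2"
proof -
  let ?d = "Xa - Xb"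
  have "Rop Rquot_cofactor $ 0 =
      Xb * (Xb * Rquot_cofactor $ 0 - Rquot_cofactor $ 1) - (Xb * Rquot_cofactor $ 1 - 2 * Rquot_cofactor $ 2)
      - ?d\<^sup>2 * Rquot_cofactor $ 0"
    unfolding Rop_def Let_def by (simp add: numeral_2_eq_2)
  then have "RT_quot 0 = Xb * (Xb * 2 - - ?d) - (Xb * - ?d - 2 * (Const (-1/12) + Const (1/6) * ?d\<^sup>2 * 2))
      - ?d\<^sup>2 * 2 - Const (2/3) * ((Xb + ?d)\<^sup>2 + (Xb + ?d) * Xb + Xb\<^sup>2 - Const (1/4))"
    unfolding RT_quot_def Rquot_cofactor_nth_012
    by (simp add: Exp_nth mult.commute[of _ 2] del: diff_add_cancel)
  also have "\<dots> = Xb\<^sup>2 * (2 - Const (2/3) * 3) + Xb * ?d * (2 - Const (2/3) * 3)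
      + ?d\<^sup>2 * (4 * Const (1/6) - Const (2/3)) - 2 * ?d\<^sup>2 + (2 * Const (-1/12) + Const (2/3) * Const (1/4))"
    by (simp add: algebra_simps power2_eq_square)
  also have "\<dots> = - 2 * ?d\<^sup>2"
    by (simp add: Const_numeral[symmetric] Const_mult Const_add Const_diff)
  finally show ?thesis .
qed

lemma B_sol_0: "B_sol 0 = (Xa - Xb)\<^sup>2"
proof -
  have "Const (-1/2) * (- 2) = (1 :: mpoly)"
    by (simp add: Const_numeral[symmetric] Const_uminus Const_mult)
  then show ?thesis
    by (simp only: B_sol.simps RT_quot_0 mult.assoc[symmetric] mult_1)
qed

definition b_to_a :: "nat \<Rightarrow> mpoly" where
  "b_to_a i = (if i = 1 then Xa else Var i)"

lemma b_to_a_simps [simp]: "b_to_a 0 = Xa" "b_to_a (Suc 0) = Xa"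
  by (simp_all add: b_to_a_def)

lemma subst_fps_b_to_a_Rquot_cofactor: "subst_fps b_to_a Rquot_cofactor = fps_Const X_div_sinh_half"
proof -
  have "subst_fps b_to_a expm1_quot = 1"
  proof (rule fps_ext)
    fix n show "subst_fps b_to_a expm1_quot $ n = 1 $ n"
      by (cases n) (simp_all add: expm1_quot_nth subst_simps)
  qed
  then show ?thesis
    unfolding Rquot_cofactor_def subst_fps_mult subst_fps_fps_Const by simp
qed

lemma subst_b_to_a_RT_quot:
  fixes M defines "M \<equiv> X_div_sinh_half"
  shows "subst b_to_a (RT_quot k) =
      Xa * (Xa * Const (M $ k) - of_nat (k + 1) * Const (M $ (k + 1)))
    - of_nat (k + 1) * (Xa * Const (M $ (k + 1)) - of_nat (k + 2) * Const (M $ (k + 2)))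
    - Const (2 / (3 * fact k)) * (3 * Xa\<^sup>2 - Const (1/4)) * Xa ^ k"
proof -
  let ?L = "\<lambda>H. fps_const Xa * H - fps_deriv H"
  have "subst b_to_a ((Xa - Xb)\<^sup>2) = 0" "subst b_to_a (half * (Xa - Xb)) = 0"
    by (simp_all add: subst_simps)
  then have "subst_fps b_to_a (Exp (half * (Xa - Xb)) * Rop Rquot_cofactor) = ?L (?L (fps_Const M))"
    unfolding Rop_def Let_def M_def
    by (simp only: subst_fps_diff subst_fps_mult subst_fps_const subst_fps_deriv subst_fps_Exp subst_Var
        subst_fps_b_to_a_Rquot_cofactor b_to_a_simps One_nat_def fps_const_0_eq_0 Exp_0
        mult_zero_left mult_1_left diff_0_right)
  then have "subst b_to_a ((Exp (half * (Xa - Xb)) * Rop Rquot_cofactor) $ k) = ?L (?L (fps_Const M)) $ k"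
    by (metis subst_fps_nth)
  also have "\<dots> = Xa * (Xa * Const (M $ k) - of_nat (k + 1) * Const (M $ (k + 1)))
    - of_nat (k + 1) * (Xa * Const (M $ (k + 1)) - of_nat (k + 2) * Const (M $ (k + 2)))"
    by (simp add: numeral_2_eq_2 del: of_nat_Suc) (simp add: algebra_simps)
  finally have series: "subst b_to_a ((Exp (half * (Xa - Xb)) * Rop Rquot_cofactor) $ k) = \<dots>" .
  have "half * (Xa + Xa) = Xa"
    by (simp only: mult_2[symmetric] half_mult_double)
  then have "subst b_to_a (Const (2 / (3 * fact k)) * (Xa\<^sup>2 + Xa * Xb + Xb\<^sup>2 - Const (1/4)) * (half * (Xa + Xb)) ^ k)
      = Const (2 / (3 * fact k)) * (Xa\<^sup>2 + Xa * Xa + Xa\<^sup>2 - Const (1/4)) * Xa ^ k"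
    by (simp only: subst_simps subst_Const subst_Var b_to_a_simps One_nat_def)
  also have "\<dots> = Const (2 / (3 * fact k)) * (3 * Xa\<^sup>2 - Const (1/4)) * Xa ^ k"
    by (simp add: power2_eq_square algebra_simps)
  finally show ?thesis
    using series unfolding RT_quot_def subst_diff[of b_to_a "(Exp (half * (Xa - Xb)) * Rop Rquot_cofactor) $ k"]
    by simp
qed

definition B_diag :: "nat \<Rightarrow> mpoly" where
  "B_diag k = Const (of_nat (k * (k + 3)) / fact (k + 2)) * Xa ^ (k + 2)
     - Const (1 / (12 * fact k)) * Xa ^ k
     + Const (2 * beta (k + 1)) * Xa
     - Const (2 * of_nat (k + 1) * beta (k + 2))"

lemma B_diag_coefficient_recurrences:
  "(of_nat (Suc k * (Suc k + 3)) / fact (Suc k + 2) :: rat) =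
      1 / of_nat (k + 3) * (of_nat (k * (k + 3)) / fact (k + 2) + 3 * (2 / (3 * fact (Suc k))))"
  "(1 / (12 * fact (Suc k)) :: rat) =
      1 / of_nat (k + 3) * (1 / (12 * fact k) + 2 / (3 * fact (Suc k)) * (1/4))"
proof -
  let ?x = "of_nat k :: rat" and ?F = "fact k :: rat"
  have pos: "?x + 1 \<noteq> 0" "?x + 2 \<noteq> 0" "?x + 3 \<noteq> 0" "?F \<noteq> 0"
    by (simp_all add: add_nonneg_eq_0_iff)
  have "fact (Suc k + 2) = (?x + 3) * (?x + 2) * (?x + 1) * ?F"
    "fact (k + 2) = (?x + 2) * (?x + 1) * ?F" "fact (Suc k) = (?x + 1) * ?F"
    by (simp_all add: fact_Suc numeral_3_eq_3 numeral_2_eq_2 algebra_simps)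
  moreover have "(of_nat (Suc k * (Suc k + 3)) :: rat) = (?x + 1) * (?x + 4)"
    "(of_nat (k * (k + 3)) :: rat) = ?x * (?x + 3)" "(of_nat (k + 3) :: rat) = ?x + 3"
    by (simp_all add: algebra_simps)
  ultimately show
    "(of_nat (Suc k * (Suc k + 3)) / fact (Suc k + 2) :: rat) =
      1 / of_nat (k + 3) * (of_nat (k * (k + 3)) / fact (k + 2) + 3 * (2 / (3 * fact (Suc k))))"
    "(1 / (12 * fact (Suc k)) :: rat) =
      1 / of_nat (k + 3) * (1 / (12 * fact k) + 2 / (3 * fact (Suc k)) * (1/4))"
    using pos by (simp_all add: divide_simps; simp add: algebra_simps)+
qed

lemma B_diag_Suc:
  "B_diag (Suc k) = Const (1 / of_nat (k + 3)) * (Xa * B_diag k - subst b_to_a (RT_quot (Suc k)))"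
proof -
  let ?r = "Const (1 / of_nat (k + 3))" and ?t = "Const (2 / (3 * fact (Suc k)))" and ?q = "Const (1/4)"
  let ?c1 = "Const (of_nat (k * (k + 3)) / fact (k + 2))" and ?c2 = "Const (1 / (12 * fact k))"
  let ?c3 = "Const (2 * beta (k + 1))" and ?c4 = "Const (2 * of_nat (k + 1) * beta (k + 2))"
  let ?m1 = "Const (X_div_sinh_half $ Suc k)" and ?m2 = "Const (X_div_sinh_half $ (Suc k + 1))"
  let ?m3 = "Const (X_div_sinh_half $ (Suc k + 2))"
  let ?N2 = "of_nat (Suc k + 1) :: mpoly" and ?N3 = "of_nat (Suc k + 2) :: mpoly"
  let ?A1 = "Const (of_nat (Suc k * (Suc k + 3)) / fact (Suc k + 2))"
  let ?A2 = "Const (1 / (12 * fact (Suc k)))"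
  let ?A3 = "Const (2 * beta (Suc k + 1))" and ?A4 = "Const (2 * of_nat (Suc k + 1) * beta (Suc k + 2))"
  have h1: "?A1 = ?r * (?c1 + 3 * ?t)"
    by (simp only: Const_numeral[symmetric] Const_mult Const_add B_diag_coefficient_recurrences(1))
  have h2: "?A2 = ?r * (?c2 + ?t * ?q)"
    by (simp only: Const_mult Const_add B_diag_coefficient_recurrences(2))
  have h3: "?c3 = ?m1"
    by (simp add: X_div_sinh_half_nth)
  have h4: "?A3 = ?r * (2 * ?N2 * ?m2 - ?c4)"
  proof -
    have "2 * ?N2 * ?m2 - ?c4 = Const (2 * of_nat (Suc k + 1) * (2 * beta (k + 2)) - 2 * of_nat (k + 1) * beta (k + 2))"
      by (simp add: X_div_sinh_half_nth Const_numeral[symmetric] Const_of_nat[symmetric] Const_mult Const_diff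
          del: of_nat_Suc of_nat_add)
    moreover have "2 * beta (Suc k + 1) =
        1 / of_nat (k + 3) * (2 * of_nat (Suc k + 1) * (2 * beta (k + 2)) - 2 * of_nat (k + 1) * beta (k + 2))"
      by (simp add: field_simps; simp add: algebra_simps)
    ultimately show ?thesis by (simp only: Const_mult)
  qed
  have h5: "?A4 = ?r * (?N2 * ?N3 * ?m3)"
  proof -
    have "?N2 * ?N3 * ?m3 = Const (of_nat (Suc k + 1) * of_nat (Suc k + 2) * (2 * beta (Suc k + 2)))"
      by (simp add: X_div_sinh_half_nth Const_of_nat[symmetric] Const_mult del: of_nat_Suc of_nat_add)
    moreover have "2 * of_nat (Suc k + 1) * beta (Suc k + 2) =
        1 / of_nat (k + 3) * (of_nat (Suc k + 1) * of_nat (Suc k + 2) * (2 * beta (Suc k + 2)))"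
      by (simp add: field_simps; simp add: algebra_simps)
    ultimately show ?thesis by (simp only: Const_mult)
  qed
  have "B_diag (Suc k) = ?A1 * (Xa\<^sup>2 * (Xa * Xa ^ k)) - ?A2 * (Xa * Xa ^ k) + ?A3 * Xa - ?A4"
    unfolding B_diag_def by (simp add: power_add mult_ac power2_eq_square del: of_nat_Suc)
  also have "\<dots> = ?r * (Xa * (?c1 * (Xa\<^sup>2 * Xa ^ k) - ?c2 * Xa ^ k + ?c3 * Xa - ?c4)
      - (Xa * (Xa * ?m1 - ?N2 * ?m2) - ?N2 * (Xa * ?m2 - ?N3 * ?m3) - ?t * (3 * Xa\<^sup>2 - ?q) * (Xa * Xa ^ k)))"
    unfolding h1 h2 h3 h4 h5 by (simp add: algebra_simps power2_eq_square)
  also have "Xa * (Xa * ?m1 - ?N2 * ?m2) - ?N2 * (Xa * ?m2 - ?N3 * ?m3) - ?t * (3 * Xa\<^sup>2 - ?q) * (Xa * Xa ^ k)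
      = subst b_to_a (RT_quot (Suc k))"
    unfolding subst_b_to_a_RT_quot by (simp del: of_nat_Suc of_nat_add)
  also have "?c1 * (Xa\<^sup>2 * Xa ^ k) - ?c2 * Xa ^ k + ?c3 * Xa - ?c4 = B_diag k"
    unfolding B_diag_def by (simp add: power_add mult_ac power2_eq_square)
  finally show ?thesis .
qed

lemma subst_b_to_a_B_sol: "subst b_to_a (B_sol k) = B_diag k"
proof (induction k)
  case 0
  have betas: "beta (Suc 0) = 0" "beta (Suc (Suc 0)) = - 1/24"
    using X_div_sinh_half_nth_012(2,3) X_div_sinh_half_nth[of "Suc 0"] X_div_sinh_half_nth[of "Suc (Suc 0)"]
    by (simp_all add: numeral_2_eq_2)
  have "B_diag 0 = 0"
    unfolding B_diag_def by (simp add: betas Const_uminus Const_diff)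
  then show ?case
    unfolding B_sol_0 by (simp add: subst_simps)
next
  case (Suc k)
  have "subst b_to_a (half * (Xa + Xb)) = Xa"
    by (simp add: subst_simps mult_2[symmetric] half_mult_double)
  then show ?case
    by (simp add: subst_simps Suc.IH B_diag_Suc)
qed

lemma total_degree_B_diag:
  assumes "k \<ge> 1"
  shows "k + 2 \<le> total_degree (B_diag k)"
proof -
  let ?m = "Poly_Mapping.single (0::nat) (k + 2)"
  have "Xa ^ n = Poly_Mapping.single (Poly_Mapping.single 0 n) 1" for n
    by (induction n) (simp_all add: Var_def mult_single single_add[symmetric])
  then have monomial: "Const c * Xa ^ n = Poly_Mapping.single (Poly_Mapping.single 0 n) c" for c n
    by (simp add: Const_def mult_single)
  have "B_diag k = Poly_Mapping.single ?m (of_nat (k * (k + 3)) / fact (k + 2))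
      - Poly_Mapping.single (Poly_Mapping.single 0 k) (1 / (12 * fact k))
      + Poly_Mapping.single (Poly_Mapping.single 0 1) (2 * beta (k + 1))
      - Poly_Mapping.single 0 (2 * of_nat (k + 1) * beta (k + 2))"
    unfolding B_diag_def monomial[symmetric] monomial[of _ 1, simplified] by (simp add: Const_def)
  moreover have "Poly_Mapping.single 0 n \<noteq> ?m" if "n \<noteq> k + 2" for n
    using that by (metis lookup_single_eq)
  moreover have "0 \<noteq> ?m"
    by (metis lookup_single_eq lookup_zero add_2_eq_Suc' nat.distinct(1))
  ultimately have "Poly_Mapping.lookup (B_diag k) ?m = of_nat (k * (k + 3)) / fact (k + 2)"
    using assms by (simp add: lookup_add lookup_minus lookup_single when_def)
  moreover have "(of_nat (k * (k + 3)) / fact (k + 2) :: rat) \<noteq> 0"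
    using assms by simp
  ultimately show ?thesis
    using mdeg_le_total_degree[of "B_diag k" ?m] by simp
qed

lemma total_degree_B_sol: "total_degree (B_sol k) = k + 2"
proof (cases "k = 0")
  case True
  have "homogeneous 2 ((Xa - Xb)\<^sup>2)"
    by (intro homogeneous_power[where d = 1] homogeneous_diff homogeneous_Var) simp
  moreover have "(Xa - Xb)\<^sup>2 \<noteq> 0"
    using Var_diff_neq_0[of 0 1] by simp
  ultimately have "total_degree ((Xa - Xb)\<^sup>2) = 2"
    by (rule total_degree_homogeneous)
  then show ?thesis
    unfolding True B_sol_0 by simp
next
  case False
  have "k + 2 \<le> total_degree (subst b_to_a (B_sol k))"
    using total_degree_B_diag False by (simp add: subst_b_to_a_B_sol)
  also have "\<dots> \<le> total_degree (B_sol k)"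
    by (rule total_degree_subst_le) (simp add: b_to_a_def total_degree_Var_le)
  finally show ?thesis
    using total_degree_B_sol_le[of k] by simp
qed

theorem lemma4:
  shows
  "(\<exists>!A :: nat \<Rightarrow> mpoly. \<forall>k.
        vars (A k) \<subseteq> {0, 1, 2, 3} \<and>
        of_nat (k + 2) * (Xa - Xb + Xc - Xd) * A k =
          Const (1/2) * (Xa^2 - Xb^2 + Xc^2 - Xd^2) * (if k = 0 then 0 else A (k - 1)) - P k)
   \<and> (\<exists>!B :: nat \<Rightarrow> mpoly. \<forall>k.
        vars (B k) \<subseteq> {0, 1} \<and>
        of_nat (k + 2) * (Xa - Xb) * B k =
          Const (1/2) * (Xa^2 - Xb^2) * (if k = 0 then 0 else B (k - 1)) - R k - T k)
   \<and> (\<forall>A :: nat \<Rightarrow> mpoly.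
        (\<forall>k. vars (A k) \<subseteq> {0, 1, 2, 3} \<and>
          of_nat (k + 2) * (Xa - Xb + Xc - Xd) * A k =
            Const (1/2) * (Xa^2 - Xb^2 + Xc^2 - Xd^2) * (if k = 0 then 0 else A (k - 1)) - P k)
        \<longrightarrow> (\<forall>k\<ge>1. total_degree (A k) = k + 1)
          \<and> (\<forall>k. (Xb - Xc) * subst (\<lambda>i. if i = 3 then Xa + Xc - Xb else Var i) (A k) =
                 Const (1 / fact (k + 1)) * (Xa - Xb) *
                 (Xa ^ (k + 1) - Xb ^ (k + 1) + Xc ^ (k + 1) - (Xa + Xc - Xb) ^ (k + 1))))
   \<and> (\<forall>B :: nat \<Rightarrow> mpoly.
        (\<forall>k. vars (B k) \<subseteq> {0, 1} \<and>
          of_nat (k + 2) * (Xa - Xb) * B k =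
            Const (1/2) * (Xa^2 - Xb^2) * (if k = 0 then 0 else B (k - 1)) - R k - T k)
        \<longrightarrow> (\<forall>k. total_degree (B k) = k + 2)
          \<and> (\<forall>k. subst (\<lambda>i. if i = 1 then Xa else Var i) (B k) =
                 Const (of_nat (k * (k + 3)) / fact (k + 2)) * Xa ^ (k + 2)
                 - Const (1 / (12 * fact k)) * Xa ^ k
                 + Const (2 * beta (k + 1)) * Xa
                 - Const (2 * of_nat (k + 1) * beta (k + 2))))"
proof -
  have A: "A_recurrence A \<longleftrightarrow> A = A_sol" for A
    using A_recurrence_A_sol A_recurrence_unique by blast
  have B: "B_recurrence B \<longleftrightarrow> B = B_sol" for B
    using B_recurrence_B_sol B_recurrence_unique by blast
  show ?thesis
    unfolding all_conj_distrib A_recurrence_def[symmetric] B_recurrence_def[symmetric] A B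
    using vars_A_sol A_recurrence_total_degree[OF A_recurrence_A_sol]
      A_recurrence_subst_d_elim[OF A_recurrence_A_sol] vars_B_sol total_degree_B_sol subst_b_to_a_B_sol
    unfolding d_elim_def[abs_def] b_to_a_def[abs_def] B_diag_def
    by auto
qed

end
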